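(* Let $n\ge2$, $U\subseteq\mathbb{R}^n$ open, and $f,g\in C(U,\mathbb{R}^n)$ both injective. Let $W$ be a connected open subset of $\mathbb{R}^n$ with $\overline W$ a compact subset of $f(U)$. Choose $y\in W$ and $\delta,\eta>0$ with $y+Z_{\delta,\eta}(0)\subseteq W$ such that the closure of $W_{\delta,\eta}:=W+Z_{\delta,\eta}(0)$ is still a subset of $f(U)$. Put $A:=f^{-1}(\overline{W_{\delta,\eta}})$ and write $f=(\hat f,f^n)$, $g=(\hat g,g^n)$. If $$\|\hat g-\hat f\|_{\infty,A}<\delta\quad\text{and}\quad\|g^n-f^n\|_{\infty,A}<\eta,$$ then $\overline W\subseteq g(A)^\circ$ (the interior of $g(A)$).
   Context: For $x=(x^1,\dots,x^n)\in\mathbb{R}^n$ write $\hat x=(x^1,\dots,x^{n-1})$; for a map $f=(f^1,\dots,f^n)$ write $\hat f=(f^1,\dots,f^{n-1})$. The cylinder $Z_{\delta,\eta}(x):=B_\delta(\hat x)\times(x^n-\eta,x^n+\eta)$, where $B_\delta(\hat x)$ is the open Euclidean ball in $\mathbb{R}^{n-1}$. $W+Z$ denotes the Minkowski sum. *)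

theory Defs
  imports "HOL-Analysis.Analysis"
begin

text \<open>We model R^n as (real^'m) \<times> real with n = CARD('m) + 1 (so n \<ge> 2 automatically).
  A point x = (x_hat, x_n); fst gives the first n-1 coordinates, snd the last one.
  The product norm is the Euclidean norm.\<close>

definition cylinder :: "real \<Rightarrow> real \<Rightarrow> (real^'m) \<times> real \<Rightarrow> ((real^'m) \<times> real) set" where
  "cylinder \<delta> \<eta> x = ball (fst x) \<delta> \<times> {snd x - \<eta> <..< snd x + \<eta>}"

definition minkowski_sum :: "'a::plus set \<Rightarrow> 'a set \<Rightarrow> 'a set" where
  "minkowski_sum S T = {s + t | s t. s \<in> S \<and> t \<in> T}"

end

theory Submission
  imports Defs
begin

text \<open>
  Put \<open>Z = Z_{\<delta>,\<eta>}(0)\<close>, \<open>\<Omega> = W + Z\<close> and \<open>V = f\<^sup>-\<^sup>1(\<Omega>)\<close>.  By invariance of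
  domain \<open>f\<close> is a homeomorphism onto the open set \<open>f(U)\<close>, so \<open>A = f\<^sup>-\<^sup>1(closure \<Omega>)\<close> is
  compact, and \<open>g(V)\<close> is open.  The sup-norm hypotheses say \<open>f x - g x \<in> Z\<close> on \<open>A\<close>;
  hence every point \<open>w = g x\<close> of \<open>closure W \<inter> closure (g(V))\<close> satisfies
  \<open>f x = w + (f x - g x) \<in> closure W + Z \<subseteq> \<Omega>\<close>, i.e. \<open>w \<in> g(V)\<close>.  So \<open>g(V)\<close> is
  relatively clopen in the connected set \<open>W\<close>; it meets \<open>W\<close> in \<open>y\<close>, which is shown by
  Brouwer's fixed point theorem on a box around \<open>y\<close> inside \<open>y + Z \<subseteq> W\<close>.  Therefore
  \<open>closure W \<subseteq> g(V) \<subseteq> interior (g(A))\<close>.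
\<close>

lemma minkowski_sum_UN: "minkowski_sum S T = (\<Union>w\<in>S. (\<lambda>t. w + t) ` T)"
  unfolding minkowski_sum_def by auto

lemma open_minkowski_sum:
  fixes T :: "'a::real_normed_vector set"
  assumes "open T"
  shows "open (minkowski_sum S T)"
  unfolding minkowski_sum_UN using assms by (intro open_UN ballI open_translation)

lemma bounded_minkowski_sum:
  fixes S T :: "'a::real_normed_vector set"
  assumes "bounded S" "bounded T"
  shows "bounded (minkowski_sum S T)"
proof -
  have "minkowski_sum S T = (\<lambda>(x,y). x + y) ` (S \<times> T)"
    unfolding minkowski_sum_def by auto
  then show ?thesis using bounded_plus[OF assms] by simp
qed

lemma subset_minkowski_sum: "0 \<in> T \<Longrightarrow> S \<subseteq> minkowski_sum S (T::'a::monoid_add set)"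
  unfolding minkowski_sum_def by force

lemma closure_plus_open_in_minkowski_sum:
  fixes S T :: "'a::real_normed_vector set"
  assumes "open T" "w \<in> closure S" "t \<in> T"
  shows "w + t \<in> minkowski_sum S T"
proof -
  obtain e where e: "e > 0" "ball t e \<subseteq> T"
    using assms(1,3) open_contains_ball by blast
  obtain w' where w': "w' \<in> S" "dist w' w < e"
    using assms(2) e(1) closure_approachable by blast
  have "t + w - w' \<in> T"
    using w'(2) e(2) by (auto simp: dist_norm)
  moreover have "w + t = w' + (t + w - w')" by simp
  ultimately show ?thesis using w'(1) unfolding minkowski_sum_def by blast
qed

lemma mem_cylinder_0:
  "t \<in> cylinder \<delta> \<eta> (0::(real^'m) \<times> real) \<longleftrightarrow> norm (fst t) < \<delta> \<and> \<bar>snd t\<bar> < \<eta>"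
  by (cases t) (auto simp: cylinder_def dist_norm abs_less_iff)

lemma open_cylinder: "open (cylinder \<delta> \<eta> x)"
  unfolding cylinder_def by (intro open_Times) auto

lemma bounded_cylinder: "bounded (cylinder \<delta> \<eta> x)"
  unfolding cylinder_def by (intro bounded_Times bounded_ball) auto

lemma box_subset_translated_cylinder:
  fixes y :: "(real^'m) \<times> real"
  assumes "r < \<delta>" "s < \<eta>"
  shows "cball (fst y) r \<times> cball (snd y) s \<subseteq> (\<lambda>z. y + z) ` cylinder \<delta> \<eta> 0"
proof
  fix c assume c: "c \<in> cball (fst y) r \<times> cball (snd y) s"
  have "c - y \<in> cylinder \<delta> \<eta> 0"
    using c assms by (cases c; cases y) (auto simp: mem_cylinder_0 dist_norm norm_minus_commute)
  then show "c \<in> (\<lambda>z. y + z) ` cylinder \<delta> \<eta> 0"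
    by (rule rev_image_eqI) simp
qed

lemma cylinder_neighbourhood:
  fixes W :: "((real^'m) \<times> real) set"
  assumes "bounded W" "0 < \<delta>" "0 < \<eta>"
  shows "open (minkowski_sum W (cylinder \<delta> \<eta> 0))"
    and "W \<subseteq> minkowski_sum W (cylinder \<delta> \<eta> 0)"
    and "compact (closure (minkowski_sum W (cylinder \<delta> \<eta> 0)))"
  using assms
  by (auto simp: open_cylinder bounded_cylinder mem_cylinder_0 open_minkowski_sum
      subset_minkowski_sum bounded_minkowski_sum compact_closure)

lemma compact_preimage_injective:
  fixes f :: "'a::euclidean_space \<Rightarrow> 'a"
  assumes "open U" "continuous_on U f" "inj_on f U" "compact K" "K \<subseteq> f ` U"
  shows "compact {x \<in> U. f x \<in> K}"
proof -
  obtain finv where hom: "homeomorphism U (f ` U) f finv"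
    using invariance_of_domain_homeomorphism[OF assms(1,2) _ assms(3)] by auto
  have "{x \<in> U. f x \<in> K} = finv ` K"
    using hom assms(5) unfolding homeomorphism_def by (auto simp: image_iff) metis
  moreover have "continuous_on K finv"
    using hom assms(5) unfolding homeomorphism_def by (meson continuous_on_subset)
  ultimately show ?thesis using assms(4) compact_continuous_image by metis
qed

lemma compact_SUP_less_bound:
  fixes h :: "'a::topological_space \<Rightarrow> real"
  assumes "compact A" "continuous_on A h" "(SUP x\<in>A. h x) < c" "0 < c"
  obtains r where "0 \<le> r" "r < c" "\<And>x. x \<in> A \<Longrightarrow> h x \<le> r"
proof
  show "0 \<le> max 0 (SUP x\<in>A. h x)" and "max 0 (SUP x\<in>A. h x) < c"
    using assms(3,4) by auto
  show "h x \<le> max 0 (SUP x\<in>A. h x)" if "x \<in> A" for x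
    using assms(1,2) that
    by (intro max.coboundedI2 cSUP_upper bounded_imp_bdd_above compact_imp_bounded compact_continuous_image)
qed

lemma uniform_bounds_from_SUP:
  fixes f g :: "'a::topological_space \<Rightarrow> 'b::real_normed_vector \<times> real"
  assumes "compact A" "continuous_on A f" "continuous_on A g"
    and "(SUP x\<in>A. norm (fst (g x) - fst (f x))) < \<delta>" "0 < \<delta>"
    and "(SUP x\<in>A. \<bar>snd (g x) - snd (f x)\<bar>) < \<eta>" "0 < \<eta>"
  obtains r s where "0 \<le> r" "r < \<delta>" "0 \<le> s" "s < \<eta>"
    and "\<And>x. x \<in> A \<Longrightarrow> norm (fst (g x) - fst (f x)) \<le> r \<and> \<bar>snd (g x) - snd (f x)\<bar> \<le> s"
proof -
  have "continuous_on A (\<lambda>x. norm (fst (g x) - fst (f x)))"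
    and "continuous_on A (\<lambda>x. \<bar>snd (g x) - snd (f x)\<bar>)"
    by (intro continuous_intros assms(2,3))+
  from compact_SUP_less_bound[OF assms(1) this(1) assms(4,5)]
    compact_SUP_less_bound[OF assms(1) this(2) assms(6,7)]
  show ?thesis using that by metis
qed

lemma connected_closure_subset_open:
  assumes "connected W" "open G" "W \<inter> G \<noteq> {}"
    and limits: "closure W \<inter> closure G \<subseteq> G"
  shows "closure W \<subseteq> G"
proof -
  have "openin (top_of_set W) (W \<inter> G)"
    using assms(2) by (simp add: openin_open_Int)
  moreover have "W \<inter> G = W \<inter> closure G"
    using limits closure_subset[of W] closure_subset[of G] by blast
  then have "closedin (top_of_set W) (W \<inter> G)"
    by (simp add: closedin_closed_Int)
  ultimately have "W \<subseteq> G"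
    using assms(1,3) connected_clopen by blast
  then show ?thesis using limits closure_mono[of W G] by blast
qed

lemma closure_perturbed_image:
  fixes f g :: "'a::topological_space \<Rightarrow> 'b::real_normed_vector"
  assumes "compact A" "continuous_on A g"
    and displacement: "\<And>x. x \<in> A \<Longrightarrow> f x - g x \<in> Z"
    and absorb: "\<And>w t. w \<in> S \<Longrightarrow> t \<in> Z \<Longrightarrow> w + t \<in> \<Omega>"
  shows "S \<inter> closure (g ` {x \<in> A. f x \<in> \<Omega>}) \<subseteq> g ` {x \<in> A. f x \<in> \<Omega>}"
proof
  fix w assume w: "w \<in> S \<inter> closure (g ` {x \<in> A. f x \<in> \<Omega>})"
  have "closure (g ` {x \<in> A. f x \<in> \<Omega>}) \<subseteq> g ` A"
    using compact_continuous_image[OF assms(2,1)]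
    by (intro closure_minimal image_mono) (auto dest: compact_imp_closed)
  then obtain x where x: "x \<in> A" "w = g x" using w by auto
  have "f x = w + (f x - g x)" using x by simp
  also have "\<dots> \<in> \<Omega>" using absorb displacement[OF x(1)] w by blast
  finally show "w \<in> g ` {x \<in> A. f x \<in> \<Omega>}" using x by auto
qed

lemma closure_in_interior_of_perturbed_image:
  fixes f g :: "'a::euclidean_space \<Rightarrow> 'a"
  assumes "open U" "continuous_on U f" "continuous_on U g" "inj_on g U"
    and "connected W" "open \<Omega>"
    and "compact A" "A \<subseteq> U" "{x \<in> U. f x \<in> \<Omega>} \<subseteq> A"
    and displacement: "\<And>x. x \<in> A \<Longrightarrow> f x - g x \<in> Z"
    and absorb: "\<And>w t. w \<in> closure W \<Longrightarrow> t \<in> Z \<Longrightarrow> w + t \<in> \<Omega>"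
    and hit: "W \<inter> g ` {x \<in> U. f x \<in> \<Omega>} \<noteq> {}"
  shows "closure W \<subseteq> interior (g ` A)"
proof -
  define V where "V = {x \<in> U. f x \<in> \<Omega>}"
  have "V \<subseteq> U" unfolding V_def by auto
  have "open V"
    using continuous_open_preimage[OF assms(2,1,6)] unfolding V_def by (simp add: Int_def)
  then have "open (g ` V)"
    using invariance_of_domain[OF continuous_on_subset[OF assms(3) \<open>V \<subseteq> U\<close>] _
        inj_on_subset[OF assms(4) \<open>V \<subseteq> U\<close>]] by blast
  have "V = {x \<in> A. f x \<in> \<Omega>}"
    using assms(8,9) unfolding V_def by auto
  then have "closure W \<inter> closure (g ` V) \<subseteq> g ` V"
    using closure_perturbed_image[OF assms(7) continuous_on_subset[OF assms(3,8)] displacement absorb]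
    by simp
  then have "closure W \<subseteq> g ` V"
    using connected_closure_subset_open[OF assms(5) \<open>open (g ` V)\<close> hit[folded V_def]] by blast
  also have "g ` V \<subseteq> interior (g ` A)"
    using assms(9) interior_maximal[OF _ \<open>open (g ` V)\<close>] unfolding V_def by blast
  finally show ?thesis .
qed

section \<open>The Brouwer step\<close>

text \<open>Brouwer box lemma: a continuous map of a box around \<open>y\<close> that moves no point by more
  than the box radii (componentwise) hits the centre \<open>y\<close>.  Indeed \<open>z \<mapsto> z - \<phi> z + y\<close>
  maps the box into itself and its fixed points are the preimages of \<open>y\<close>.\<close>

lemma box_displacement_hits_centre:
  fixes \<phi> :: "'a::euclidean_space \<times> 'b::euclidean_space \<Rightarrow> 'a \<times> 'b"
    and y :: "'a \<times> 'b" and r s :: real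
  defines "C \<equiv> cball (fst y) r \<times> cball (snd y) s"
  assumes "0 \<le> r" "0 \<le> s" "continuous_on C \<phi>"
    and small: "\<And>c. c \<in> C \<Longrightarrow> norm (fst (\<phi> c - c)) \<le> r \<and> norm (snd (\<phi> c - c)) \<le> s"
  shows "y \<in> \<phi> ` C"
proof -
  define T where "T z = z - \<phi> z + y" for z
  have "continuous_on C T"
    unfolding T_def using assms(4) by (intro continuous_intros)
  moreover have "T \<in> C \<rightarrow> C"
  proof
    fix z assume "z \<in> C"
    then show "T z \<in> C"
      using small[of z] unfolding C_def T_def
      by (cases z; cases y; cases "\<phi> z") (simp add: dist_norm norm_minus_commute)
  qed
  moreover have "compact C" "convex C" "C \<noteq> {}"
    unfolding C_def using assms(2,3) by (auto intro!: compact_Times convex_Times)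
  ultimately obtain z where "z \<in> C" "T z = z"
    using brouwer by blast
  then show ?thesis unfolding T_def by (auto simp: algebra_simps)
qed

lemma centre_in_perturbed_image:
  fixes f g :: "'a::euclidean_space \<times> 'b::euclidean_space \<Rightarrow> 'a \<times> 'b"
    and y :: "'a \<times> 'b" and r s :: real
  defines "C \<equiv> cball (fst y) r \<times> cball (snd y) s"
  assumes "open U" "continuous_on U f" "inj_on f U" "continuous_on U g"
    and "0 \<le> r" "0 \<le> s" and cover: "C \<subseteq> f ` U"
    and close: "\<And>x. x \<in> U \<Longrightarrow> f x \<in> C \<Longrightarrow>
                  norm (fst (g x - f x)) \<le> r \<and> norm (snd (g x - f x)) \<le> s"
  shows "y \<in> g ` {x \<in> U. f x \<in> C}"
proof -
  obtain finv where hom: "homeomorphism U (f ` U) f finv"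
    using invariance_of_domain_homeomorphism[OF assms(2,3) _ assms(4)] by auto
  have inv: "finv c \<in> U" "f (finv c) = c" if "c \<in> C" for c
    using hom cover that unfolding homeomorphism_def by auto
  have "continuous_on C (g \<circ> finv)"
    using hom assms(5) cover inv(1) unfolding homeomorphism_def
    by (intro continuous_on_compose) (auto elim: continuous_on_subset)
  moreover have "norm (fst ((g \<circ> finv) c - c)) \<le> r \<and> norm (snd ((g \<circ> finv) c - c)) \<le> s"
    if "c \<in> C" for c
    using close[of "finv c"] inv[OF that] that by simp
  ultimately have "y \<in> (g \<circ> finv) ` C"
    using box_displacement_hits_centre[of r s y] assms(6,7) unfolding C_def by blast
  then show ?thesis using inv by force
qed

lemma centre_in_perturbed_image_cylinder:
  fixes f g :: "(real^'m) \<times> real \<Rightarrow> (real^'m) \<times> real"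
    and y :: "(real^'m) \<times> real" and \<delta> \<eta> r s :: real
  defines "Y \<equiv> (\<lambda>z. y + z) ` cylinder \<delta> \<eta> 0"
  assumes "open U" "continuous_on U f" "inj_on f U" "continuous_on U g"
    and "0 \<le> r" "r < \<delta>" "0 \<le> s" "s < \<eta>" and cover: "Y \<subseteq> f ` U"
    and close: "\<And>x. x \<in> U \<Longrightarrow> f x \<in> Y \<Longrightarrow>
                  norm (fst (g x) - fst (f x)) \<le> r \<and> \<bar>snd (g x) - snd (f x)\<bar> \<le> s"
  shows "y \<in> g ` {x \<in> U. f x \<in> Y}"
proof -
  define B where "B = cball (fst y) r \<times> cball (snd y) s"
  have "B \<subseteq> Y"
    using box_subset_translated_cylinder[OF assms(7,9)] unfolding B_def Y_def .
  have "y \<in> g ` {x \<in> U. f x \<in> B}"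
    unfolding B_def
  proof (rule centre_in_perturbed_image[OF assms(2-6,8)])
    show "cball (fst y) r \<times> cball (snd y) s \<subseteq> f ` U"
      using \<open>B \<subseteq> Y\<close> cover unfolding B_def by (rule order_trans)
    fix x assume "x \<in> U" "f x \<in> cball (fst y) r \<times> cball (snd y) s"
    then show "norm (fst (g x - f x)) \<le> r \<and> norm (snd (g x - f x)) \<le> s"
      using close[of x] \<open>B \<subseteq> Y\<close> unfolding B_def by auto
  qed
  then show ?thesis using \<open>B \<subseteq> Y\<close> by auto
qed

theorem theorem8p1:
  fixes U W :: "((real^'m) \<times> real) set"
    and f g :: "(real^'m) \<times> real \<Rightarrow> (real^'m) \<times> real"
    and y :: "(real^'m) \<times> real"
    and \<delta> \<eta> :: real
  assumes "open U"
    and "continuous_on U f" and "inj_on f U"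
    and "continuous_on U g" and "inj_on g U"
    and "connected W" and "open W"
    and "compact (closure W)" and "closure W \<subseteq> f ` U"
    and "y \<in> W" and "\<delta> > 0" and "\<eta> > 0"
    and "(\<lambda>z. y + z) ` cylinder \<delta> \<eta> 0 \<subseteq> W"
    and "closure (minkowski_sum W (cylinder \<delta> \<eta> 0)) \<subseteq> f ` U"
    and "A = {x \<in> U. f x \<in> closure (minkowski_sum W (cylinder \<delta> \<eta> 0))}"
    and "(SUP x\<in>A. norm (fst (g x) - fst (f x))) < \<delta>"
    and "(SUP x\<in>A. \<bar>snd (g x) - snd (f x)\<bar>) < \<eta>"
  shows "closure W \<subseteq> interior (g ` A)"
proof -
  define Z where "Z = cylinder \<delta> \<eta> (0::(real^'m) \<times> real)"
  define \<Omega> where "\<Omega> = minkowski_sum W Z"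
  have "bounded W"
    using bounded_subset[OF compact_imp_bounded[OF assms(8)] closure_subset] .
  then have \<Omega>: "open \<Omega>" "W \<subseteq> \<Omega>" "compact (closure \<Omega>)"
    using cylinder_neighbourhood[OF _ assms(11,12)] unfolding \<Omega>_def Z_def by auto
  have A_eq: "A = {x \<in> U. f x \<in> closure \<Omega>}"
    using assms(15) unfolding \<Omega>_def Z_def .
  have "compact A"
    using compact_preimage_injective[OF assms(1-3) \<Omega>(3)] assms(14) unfolding A_eq \<Omega>_def Z_def .
  have "A \<subseteq> U" and "{x \<in> U. f x \<in> \<Omega>} \<subseteq> A"
    unfolding A_eq using closure_subset by auto
  moreover have "continuous_on A f" "continuous_on A g"
    using continuous_on_subset assms(2,4) \<open>A \<subseteq> U\<close> by blast+
  ultimately obtain r s where rs: "0 \<le> r" "r < \<delta>" "0 \<le> s" "s < \<eta>"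
    and close: "\<And>x. x \<in> A \<Longrightarrow> norm (fst (g x) - fst (f x)) \<le> r \<and> \<bar>snd (g x) - snd (f x)\<bar> \<le> s"
    using uniform_bounds_from_SUP[OF \<open>compact A\<close> _ _ assms(16,11,17,12)] by blast
  define Y where "Y = (\<lambda>z. y + z) ` Z"
  have "Y \<subseteq> W" using assms(13) unfolding Y_def Z_def .
  have "Y \<subseteq> closure \<Omega>"
    using \<open>Y \<subseteq> W\<close> \<Omega>(2) closure_subset by (rule order_trans[OF order_trans])
  have "y \<in> g ` {x \<in> U. f x \<in> Y}"
    unfolding Y_def Z_def
  proof (rule centre_in_perturbed_image_cylinder[OF assms(1-4) rs])
    show "(\<lambda>z. y + z) ` cylinder \<delta> \<eta> 0 \<subseteq> f ` U"
      using assms(13) closure_subset assms(9) by (rule order_trans[OF order_trans])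
    show "norm (fst (g x) - fst (f x)) \<le> r \<and> \<bar>snd (g x) - snd (f x)\<bar> \<le> s"
      if "x \<in> U" "f x \<in> (\<lambda>z. y + z) ` cylinder \<delta> \<eta> 0" for x
      using close[of x] that \<open>Y \<subseteq> closure \<Omega>\<close> unfolding A_eq Y_def Z_def by auto
  qed
  show ?thesis
  proof (rule closure_in_interior_of_perturbed_image[OF assms(1,2,4,5,6) \<Omega>(1) \<open>compact A\<close>
        \<open>A \<subseteq> U\<close> \<open>{x \<in> U. f x \<in> \<Omega>} \<subseteq> A\<close>])
    show "f x - g x \<in> Z" if "x \<in> A" for x
      using close[OF that] rs(2,4)
      by (simp add: Z_def mem_cylinder_0 norm_minus_commute abs_minus_commute)
    show "w + t \<in> \<Omega>" if "w \<in> closure W" "t \<in> Z" for w t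
      using closure_plus_open_in_minkowski_sum[OF open_cylinder that[unfolded Z_def]]
      unfolding \<Omega>_def Z_def .
    show "W \<inter> g ` {x \<in> U. f x \<in> \<Omega>} \<noteq> {}"
      using \<open>y \<in> g ` {x \<in> U. f x \<in> Y}\<close> \<open>Y \<subseteq> W\<close> \<Omega>(2) assms(10) by auto
  qed
qed

end
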